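(* Let $g\in{\cal H}_d$. Call a compact set $V\subset{\bf C}^2$ admissible if $K\subset \mathrm{int}\,V$, $g(J^+\cap V)\subset J^+\cap V$ and $g^{-1}(J^-\cap V)\subset J^-\cap V$. For admissible $V$ define $$s^\pm(V)=\lim_{n\to\infty}\frac1n\log\max\{\|Dg^{\pm n}(p)\|:p\in J^\pm\cap V\}.$$ Then $s^+(V)$ and $s^-(V)$ do not depend on the choice of the admissible set $V$.
   Context: A generalized Hénon map is a map $g_i(z,w)=(w,P_i(w)+a_iz)$ of ${\bf C}^2$, where $P_i$ is a complex polynomial of degree $d_i\ge 2$ and $a_i\in{\bf C}\setminus\{0\}$. For $d\ge 2$, ${\cal H}_d$ denotes the set of all finite compositions $g=g_1\circ\cdots\circ g_m$ of generalized Hénon maps with $d_1\cdots d_m=d$. $K^\pm$ is the set of points whose forward ($+$) resp. backward ($-$) orbit under $g$ is bounded, $K=K^+\cap K^-$, $J^\pm=\partial K^\pm$. The limits defining $s^\pm(V)$ exist (submultiplicativity) and do not depend on the norm used. *)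

theory Defs
  imports "HOL-Analysis.Analysis" "HOL-Computational_Algebra.Polynomial"
begin

definition henon :: "complex poly \<Rightarrow> complex \<Rightarrow> complex \<times> complex \<Rightarrow> complex \<times> complex" where
  "henon P a = (\<lambda>(z, w). (w, poly P w + a * z))"

definition Hd :: "nat \<Rightarrow> (complex \<times> complex \<Rightarrow> complex \<times> complex) set" where
  "Hd d = {foldr (\<lambda>(P, a) f. henon P a \<circ> f) L id | L.
      L \<noteq> [] \<and> (\<forall>(P, a) \<in> set L. degree P \<ge> 2 \<and> a \<noteq> 0) \<and>
      (\<Prod>(P, a) \<leftarrow> L. degree P) = d}"

definition Kplus :: "(complex \<times> complex \<Rightarrow> complex \<times> complex) \<Rightarrow> (complex \<times> complex) set" where
  "Kplus g = {p. bounded (range (\<lambda>n. (g ^^ n) p))}"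

definition Kminus :: "(complex \<times> complex \<Rightarrow> complex \<times> complex) \<Rightarrow> (complex \<times> complex) set" where
  "Kminus g = {p. bounded (range (\<lambda>n. (inv g ^^ n) p))}"

definition Kset :: "(complex \<times> complex \<Rightarrow> complex \<times> complex) \<Rightarrow> (complex \<times> complex) set" where
  "Kset g = Kplus g \<inter> Kminus g"

definition Jplus :: "(complex \<times> complex \<Rightarrow> complex \<times> complex) \<Rightarrow> (complex \<times> complex) set" where
  "Jplus g = frontier (Kplus g)"

definition Jminus :: "(complex \<times> complex \<Rightarrow> complex \<times> complex) \<Rightarrow> (complex \<times> complex) set" where
  "Jminus g = frontier (Kminus g)"

definition admissible :: "(complex \<times> complex \<Rightarrow> complex \<times> complex) \<Rightarrow> (complex \<times> complex) set \<Rightarrow> bool" where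
  "admissible g V \<longleftrightarrow> compact V \<and> Kset g \<subseteq> interior V \<and>
     g ` (Jplus g \<inter> V) \<subseteq> Jplus g \<inter> V \<and>
     inv g ` (Jminus g \<inter> V) \<subseteq> Jminus g \<inter> V"

definition growth_seq :: "(complex \<times> complex \<Rightarrow> complex \<times> complex) \<Rightarrow> (complex \<times> complex) set \<Rightarrow> nat \<Rightarrow> real" where
  "growth_seq f S n = ln (Sup ((\<lambda>p. onorm (frechet_derivative (f ^^ n) (at p))) ` S)) / real n"

definition splus_seq where "splus_seq g V = growth_seq g (Jplus g \<inter> V)"
definition sminus_seq where "sminus_seq g V = growth_seq (inv g) (Jminus g \<inter> V)"

end

theory Submission
  imports Defs
begin

text \<open>
  Write M_C(n) for the maximum over C of the operator norm of D(g^n). If C is compact and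
  forward invariant, the chain rule makes log M_C subadditive, and since D(g^-1) is bounded
  on C, M_C(n) \<ge> c^n for some c > 0; so log M_C(n) / n converges by Fekete's lemma.
  For admissible V and V', a point lying in every image g^n(J+ \<inter> V) has bounded forward
  and backward orbits, hence lies in K, which is inside the interior of V'. By compactness
  some iterate g^N maps C = J+ \<inter> V into C' = J+ \<inter> V', and then the chain rule bound
  M_C(n + N) \<le> M_C'(n) M_C(N) gives s+(V) \<le> s+(V').
  The same argument applies to s- with g^-1 in place of g. Only the invertibility of g and
  local boundedness of Dg and D(g^-1) are used.
\<close>

lemma subadditive_mult_add_le:
  fixes b :: "nat \<Rightarrow> real"
  assumes sub: "\<And>m n. b (m + n) \<le> b m + b n"
  shows "b (q * k + r) \<le> real q * b k + b r"
proof (induction q)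
  case (Suc q)
  have "b (Suc q * k + r) \<le> b k + b (q * k + r)"
    using sub[of k "q * k + r"] by (simp add: add.assoc)
  with Suc show ?case by (simp add: algebra_simps)
qed simp

lemma subadditive_quotient_le:
  fixes b :: "nat \<Rightarrow> real"
  assumes sub: "\<And>m n. b (m + n) \<le> b m + b n" and "k > 0" "n > 0"
  shows "b n / n \<le> b k / k + (\<bar>b k\<bar> + (\<Sum>r<k. \<bar>b r\<bar>)) / n"
proof -
  define q r where "q = n div k" and "r = n mod k"
  have n: "n = q * k + r"
    unfolding q_def r_def by simp
  have "r < k"
    unfolding r_def using \<open>k > 0\<close> by simp
  have "\<bar>b r\<bar> \<le> (\<Sum>r<k. \<bar>b r\<bar>)"
    using \<open>r < k\<close> by (intro member_le_sum) auto
  then have "b r \<le> (\<Sum>r<k. \<bar>b r\<bar>)"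
    by linarith
  moreover have "real q * b k \<le> real n * (b k / k) + \<bar>b k\<bar>"
  proof -
    have "real r / k \<le> 1"
      using \<open>r < k\<close> by simp
    then have "\<bar>real r / k * b k\<bar> \<le> \<bar>b k\<bar>"
      using mult_right_mono[of "real r / k" 1 "\<bar>b k\<bar>"] by (simp add: abs_mult)
    moreover have "real q * b k = real n * (b k / k) - real r / k * b k"
      using \<open>k > 0\<close> by (simp add: n field_simps)
    ultimately show ?thesis
      by linarith
  qed
  ultimately have "b n \<le> real n * (b k / k) + (\<bar>b k\<bar> + (\<Sum>r<k. \<bar>b r\<bar>))"
    using subadditive_mult_add_le[OF sub, of q k r] unfolding n[symmetric] by linarith
  then show ?thesis
    using \<open>n > 0\<close> by (simp add: field_simps)
qed

lemma subadditive_quotient_tendsto_Inf: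
  fixes b :: "nat \<Rightarrow> real"
  assumes sub: "\<And>m n. b (m + n) \<le> b m + b n"
    and bdd: "bdd_below ((\<lambda>n. b n / n) ` {0<..})"
  shows "(\<lambda>n. b n / n) \<longlonglongrightarrow> (INF n\<in>{0<..}. b n / n)"
proof (rule order_tendstoI)
  fix a assume "a < (INF n\<in>{0<..}. b n / n)"
  then have "a < b n / n" if "n > 0" for n
    using cINF_lower[OF bdd, of n] that by force
  then show "\<forall>\<^sub>F n in sequentially. a < b n / n"
    by (simp add: eventually_sequentially) (metis Suc_le_eq)
next
  fix a assume "(INF n\<in>{0<..}. b n / n) < a"
  then obtain k where "k > 0" and k: "b k / k < a"
    by (subst (asm) cINF_less_iff[OF _ bdd]) auto
  define T where "T = \<bar>b k\<bar> + (\<Sum>r<k. \<bar>b r\<bar>)"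
  have "(\<lambda>n. b k / k + T / n) \<longlonglongrightarrow> b k / k + 0"
    by (intro tendsto_intros)
  then have "\<forall>\<^sub>F n in sequentially. b k / k + T / n < a"
    using k by (intro order_tendstoD) auto
  moreover have "\<forall>\<^sub>F n in sequentially. b n / n \<le> b k / k + T / n"
    using subadditive_quotient_le[OF sub \<open>k > 0\<close>] unfolding T_def
    by (intro eventually_sequentiallyI[of 1]) simp
  ultimately show "\<forall>\<^sub>F n in sequentially. b n / n < a"
    by eventually_elim simp
qed

lemma quotient_limit_le_shift:
  fixes b c :: "nat \<Rightarrow> real"
  assumes b: "(\<lambda>n. b n / n) \<longlonglongrightarrow> L" and c: "(\<lambda>n. c n / n) \<longlonglongrightarrow> M"
    and le: "\<And>n. b (n + N) \<le> c n + K"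
  shows "L \<le> M"
proof (rule LIMSEQ_le)
  show "(\<lambda>n. b (n + N) / real (n + N)) \<longlonglongrightarrow> L"
    using LIMSEQ_ignore_initial_segment[OF b, of N] .
  have "(\<lambda>n. c n / n * (1 - N / real (n + N)) + K / real (n + N)) \<longlonglongrightarrow> M * (1 - 0) + 0"
    using c LIMSEQ_ignore_initial_segment[OF lim_const_over_n, of _ N]
    by (intro tendsto_intros) auto
  moreover have "\<forall>\<^sub>F n in sequentially.
      c n / n * (1 - N / real (n + N)) + K / real (n + N) = (c n + K) / real (n + N)"
  proof (rule eventually_sequentiallyI[of 1])
    fix n :: nat assume "n \<ge> 1"
    then have "1 - N / real (n + N) = n / real (n + N)"
      by (simp add: field_simps)
    with \<open>n \<ge> 1\<close> show
      "c n / n * (1 - N / real (n + N)) + K / real (n + N) = (c n + K) / real (n + N)"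
      by (simp add: add_divide_distrib)
  qed
  ultimately show "(\<lambda>n. (c n + K) / real (n + N)) \<longlonglongrightarrow> M"
    by (simp add: Lim_transform_eventually)
  show "\<exists>N'. \<forall>n\<ge>N'. b (n + N) / real (n + N) \<le> (c n + K) / real (n + N)"
    using divide_right_mono[OF le] of_nat_0_le_iff by blast
qed

definition locally_bounded_derivative ::
    "('a::real_normed_vector \<Rightarrow> 'b::real_normed_vector) \<Rightarrow> bool" where
  "locally_bounded_derivative F \<longleftrightarrow> (\<forall>x. F differentiable at x) \<and>
     (\<forall>S. compact S \<longrightarrow> bdd_above ((\<lambda>x. onorm (frechet_derivative F (at x))) ` S))"

lemma locally_bounded_derivative_differentiable:
  "locally_bounded_derivative F \<Longrightarrow> F differentiable at x"
  unfolding locally_bounded_derivative_def by blast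

lemma locally_bounded_derivative_bdd_above:
  fixes F :: "'a::real_normed_vector \<Rightarrow> 'b::real_normed_vector"
  shows "locally_bounded_derivative F \<Longrightarrow> compact S \<Longrightarrow>
    bdd_above ((\<lambda>x. onorm (frechet_derivative F (at x))) ` S)"
  by (simp add: locally_bounded_derivative_def)

lemma locally_bounded_derivative_continuous_on:
  "locally_bounded_derivative F \<Longrightarrow> continuous_on S F"
  by (intro differentiable_imp_continuous_on differentiable_at_imp_differentiable_on
      locally_bounded_derivative_differentiable)

lemma bounded_linear_frechet_derivative:
  "F differentiable at x \<Longrightarrow> bounded_linear (frechet_derivative F (at x))"
  using frechet_derivative_works has_derivative_bounded_linear by blast

lemma onorm_frechet_derivative_nonneg:
  "F differentiable at x \<Longrightarrow> 0 \<le> onorm (frechet_derivative F (at x))"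
  by (intro onorm_pos_le bounded_linear_frechet_derivative)

lemma onorm_frechet_derivative_compose_le:
  assumes "F differentiable at (G x)" "G differentiable at x"
  shows "onorm (frechet_derivative (F \<circ> G) (at x)) \<le>
    onorm (frechet_derivative F (at (G x))) * onorm (frechet_derivative G (at x))"
  unfolding frechet_derivative_compose[OF assms(2,1)]
  by (intro onorm_compose bounded_linear_frechet_derivative assms)

lemma locally_bounded_derivative_id: "locally_bounded_derivative id"
  by (simp add: locally_bounded_derivative_def id_def onorm_id_le bdd_above_def) blast

lemma locally_bounded_derivative_compose:
  fixes F :: "'b::real_normed_vector \<Rightarrow> 'c::real_normed_vector"
    and G :: "'a::real_normed_vector \<Rightarrow> 'b"
  assumes F: "locally_bounded_derivative F" and G: "locally_bounded_derivative G"
  shows "locally_bounded_derivative (F \<circ> G)"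
  unfolding locally_bounded_derivative_def
proof (intro conjI allI impI)
  fix x show "(F \<circ> G) differentiable at x"
    using F G by (intro differentiable_chain_at locally_bounded_derivative_differentiable)
next
  fix S :: "'a set" assume "compact S"
  have "compact (G ` S)"
    using \<open>compact S\<close> G by (intro compact_continuous_image locally_bounded_derivative_continuous_on)
  then obtain MF where MF: "\<And>y. y \<in> G ` S \<Longrightarrow> onorm (frechet_derivative F (at y)) \<le> MF"
    using locally_bounded_derivative_bdd_above[OF F] by (meson bdd_above.E imageI)
  obtain MG where MG: "\<And>x. x \<in> S \<Longrightarrow> onorm (frechet_derivative G (at x)) \<le> MG"
    using locally_bounded_derivative_bdd_above[OF G \<open>compact S\<close>] by (meson bdd_above.E imageI)
  have "onorm (frechet_derivative (F \<circ> G) (at x)) \<le> MF * MG" if "x \<in> S" for x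
  proof -
    have "onorm (frechet_derivative (F \<circ> G) (at x)) \<le>
        onorm (frechet_derivative F (at (G x))) * onorm (frechet_derivative G (at x))"
      using F G by (intro onorm_frechet_derivative_compose_le locally_bounded_derivative_differentiable)
    also have "\<dots> \<le> MF * MG"
    proof (rule mult_mono)
      have "F differentiable at (G x)" and "G differentiable at x"
        using F G by (simp_all add: locally_bounded_derivative_differentiable)
      then show "0 \<le> MF" and "0 \<le> onorm (frechet_derivative G (at x))"
        using MF[of "G x"] that by (auto intro: order_trans[OF onorm_frechet_derivative_nonneg])
    qed (use MF MG that in auto)
    finally show ?thesis .
  qed
  then show "bdd_above ((\<lambda>x. onorm (frechet_derivative (F \<circ> G) (at x))) ` S)"
    by (intro bdd_aboveI2)
qed

lemma locally_bounded_derivative_funpow: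
  fixes F :: "'a::real_normed_vector \<Rightarrow> 'a"
  shows "locally_bounded_derivative F \<Longrightarrow> locally_bounded_derivative (F ^^ n)"
  by (induction n) (simp_all add: locally_bounded_derivative_id locally_bounded_derivative_compose)

lemma locally_bounded_derivativeI:
  fixes F :: "'a::{real_normed_vector, perfect_space} \<Rightarrow> 'b::real_normed_vector"
  assumes deriv: "\<And>x. (F has_derivative D x) (at x)"
    and bound: "\<And>x d. norm (D x d) \<le> \<phi> x * norm d" and cont: "continuous_on UNIV \<phi>"
  shows "locally_bounded_derivative F"
  unfolding locally_bounded_derivative_def
proof (intro conjI allI impI)
  fix x show "F differentiable at x"
    using deriv differentiable_def by blast
next
  fix S :: "'a set" assume "compact S"
  then have "bounded (\<phi> ` S)"
    by (intro compact_imp_bounded compact_continuous_image continuous_on_subset[OF cont]) auto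
  then obtain M where M: "\<And>x. x \<in> S \<Longrightarrow> \<phi> x \<le> M"
    using bounded_imp_bdd_above by (meson bdd_above.E imageI)
  have "onorm (frechet_derivative F (at x)) \<le> \<phi> x" for x
    unfolding frechet_derivative_at[OF deriv, symmetric] by (rule onorm_le) (rule bound)
  then show "bdd_above ((\<lambda>x. onorm (frechet_derivative F (at x))) ` S)"
    using M by (intro bdd_aboveI2) (rule order_trans)
qed

lemma funpow_image_subset: "f ` C \<subseteq> C \<Longrightarrow> (f ^^ n) ` C \<subseteq> C"
  by (induction n) (auto simp: image_subset_iff)

lemma funpow_left_inverse:
  fixes f h :: "'a \<Rightarrow> 'a"
  assumes "\<And>x. h (f x) = x"
  shows "(h ^^ n) ((f ^^ n) x) = x"
proof (induction n arbitrary: x)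
  case (Suc n)
  have "(h ^^ Suc n) ((f ^^ Suc n) x) = (h ^^ n) (h (f ((f ^^ n) x)))"
    by (metis comp_apply funpow.simps(2) funpow_Suc_right)
  with Suc assms show ?case
    by simp
qed simp

lemma continuous_on_funpow:
  assumes "continuous_on C f" "f ` C \<subseteq> C"
  shows "continuous_on C (f ^^ n)"
proof (induction n)
  case (Suc n)
  have "continuous_on ((f ^^ n) ` C) f"
    using assms(1) funpow_image_subset[OF assms(2)] by (rule continuous_on_subset)
  with Suc.IH have "continuous_on C (f \<circ> f ^^ n)"
    by (rule continuous_on_compose)
  then show ?case
    by simp
qed (simp add: continuous_on_id)

lemma funpow_image_subset_open:
  fixes f :: "'a::heine_borel \<Rightarrow> 'a"
  assumes C: "compact C" "continuous_on C f" "f ` C \<subseteq> C"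
    and U: "open U" "(\<Inter>n. (f ^^ n) ` C) \<subseteq> U"
  shows "\<exists>N. (f ^^ N) ` C \<subseteq> U"
proof (rule ccontr)
  assume "\<nexists>N. (f ^^ N) ` C \<subseteq> U"
  then have nonempty: "(f ^^ N) ` C - U \<noteq> {}" for N
    by blast
  have "compact ((f ^^ N) ` C - U)" for N
    using C U by (intro compact_diff compact_continuous_image continuous_on_funpow)
  moreover have "(f ^^ n) ` C - U \<subseteq> (f ^^ m) ` C - U" if mn: "m \<le> n" for m n
  proof -
    obtain k where "n = m + k"
      using le_Suc_ex[OF mn] by blast
    then have "(f ^^ n) ` C = (f ^^ m) ` ((f ^^ k) ` C)"
      by (simp add: funpow_add image_comp)
    also have "\<dots> \<subseteq> (f ^^ m) ` C"
      using funpow_image_subset[OF C(3)] by (intro image_mono)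
    finally show ?thesis by blast
  qed
  ultimately have "(\<Inter>N. (f ^^ N) ` C - U) \<noteq> {}"
    using nonempty by (intro compact_nest)
  then obtain q where q: "q \<in> (\<Inter>N. (f ^^ N) ` C - U)"
    by (meson ex_in_conv)
  then have "q \<in> (\<Inter>N. (f ^^ N) ` C)" and "q \<notin> U"
    by simp_all
  with U(2) show False
    by (meson subsetD)
qed

lemma mem_funpow_images_orbits:
  assumes "f ` C \<subseteq> C" "\<And>x. h (f x) = x" "q \<in> (\<Inter>n. (f ^^ n) ` C)"
  shows "(f ^^ n) q \<in> C" "(h ^^ n) q \<in> C"
proof -
  obtain c where "c \<in> C" "q = (f ^^ n) c"
    using assms(3) by blast
  then show "(h ^^ n) q \<in> C"
    using assms(2) by (simp add: funpow_left_inverse)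
  have "q \<in> (f ^^ 0) ` C"
    using assms(3) by blast
  then have "q \<in> C"
    by simp
  then show "(f ^^ n) q \<in> C"
    using funpow_image_subset[OF assms(1)] by blast
qed

definition max_deriv_norm :: "('a::real_normed_vector \<Rightarrow> 'a) \<Rightarrow> 'a set \<Rightarrow> nat \<Rightarrow> real" where
  "max_deriv_norm f C n = (SUP p\<in>C. onorm (frechet_derivative (f ^^ n) (at p)))"

lemma onorm_frechet_derivative_funpow_le:
  fixes F :: "'a::real_normed_vector \<Rightarrow> 'a"
  assumes "\<And>x. F differentiable at x"
    and "\<And>k. k < n \<Longrightarrow> onorm (frechet_derivative F (at ((F ^^ k) x))) \<le> B"
  shows "onorm (frechet_derivative (F ^^ n) (at x)) \<le> B ^ n"
  using assms(2)
proof (induction n)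
  case 0
  show ?case
    using onorm_id_le by (simp add: id_def)
next
  case (Suc n)
  have "F ^^ n differentiable at x"
    using assms(1) by (induction n) (auto intro: differentiable_chain_at simp: id_def)
  then have "onorm (frechet_derivative (F ^^ Suc n) (at x)) \<le>
      onorm (frechet_derivative F (at ((F ^^ n) x))) * onorm (frechet_derivative (F ^^ n) (at x))"
    using assms(1) by (simp add: onorm_frechet_derivative_compose_le)
  also have "\<dots> \<le> B * B ^ n"
    using Suc \<open>F ^^ n differentiable at x\<close>
    by (intro mult_mono onorm_frechet_derivative_nonneg)
      (auto intro: order_trans[OF onorm_frechet_derivative_nonneg] assms(1))
  finally show ?case
    by (simp only: power_Suc)
qed

locale left_inverse_pair =
  fixes f h :: "'a::euclidean_space \<Rightarrow> 'a"
  assumes f: "locally_bounded_derivative f" and h: "locally_bounded_derivative h"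
    and h_f: "\<And>x. h (f x) = x"
begin

lemma differentiable_funpow: "f ^^ n differentiable at x"
  by (intro locally_bounded_derivative_differentiable locally_bounded_derivative_funpow f)

lemma onorm_le_max_deriv_norm:
  assumes "compact C" "p \<in> C"
  shows "onorm (frechet_derivative (f ^^ n) (at p)) \<le> max_deriv_norm f C n"
  unfolding max_deriv_norm_def
  by (intro cSUP_upper assms locally_bounded_derivative_bdd_above locally_bounded_derivative_funpow f)

lemma max_deriv_norm_nonneg: "compact C \<Longrightarrow> C \<noteq> {} \<Longrightarrow> 0 \<le> max_deriv_norm f C n"
  by (meson all_not_in_conv differentiable_funpow onorm_frechet_derivative_nonneg
      onorm_le_max_deriv_norm order_trans)

text \<open>The chain rule applied to \<open>h ^^ n \<circ> f ^^ n = id\<close>, with \<open>Dh\<close> bounded along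
  the orbit.\<close>
lemma max_deriv_norm_exponential_lower_bound:
  assumes C: "compact C" "f ` C \<subseteq> C" "C \<noteq> {}"
  obtains c where "c > 0" "\<And>n. c ^ n \<le> max_deriv_norm f C n"
proof -
  obtain B0 where B0: "\<And>x. x \<in> C \<Longrightarrow> onorm (frechet_derivative h (at x)) \<le> B0"
    using locally_bounded_derivative_bdd_above[OF h C(1)] by (meson bdd_above.E imageI)
  define B where "B = max B0 1"
  obtain p where p: "p \<in> C"
    using C(3) by blast
  have "1 \<le> B ^ n * max_deriv_norm f C n" for n
  proof -
    have "(h ^^ n) \<circ> (f ^^ n) = id"
      by (simp add: fun_eq_iff funpow_left_inverse h_f)
    then have "1 = onorm (frechet_derivative ((h ^^ n) \<circ> (f ^^ n)) (at p))"
      using onorm_id[where 'a='a] by (simp add: id_def)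
    also have "\<dots> \<le> onorm (frechet_derivative (h ^^ n) (at ((f ^^ n) p))) *
        onorm (frechet_derivative (f ^^ n) (at p))"
      using h by (intro onorm_frechet_derivative_compose_le differentiable_funpow
          locally_bounded_derivative_differentiable locally_bounded_derivative_funpow)
    also have "\<dots> \<le> B ^ n * max_deriv_norm f C n"
    proof (intro mult_mono onorm_frechet_derivative_nonneg differentiable_funpow)
      have "(h ^^ k) ((f ^^ n) p) \<in> C" if "k < n" for k
      proof -
        have "(h ^^ k) ((f ^^ n) p) = (h ^^ k) ((f ^^ k) ((f ^^ (n - k)) p))"
          using that by (metis comp_apply funpow_add le_add_diff_inverse less_imp_le_nat)
        also have "\<dots> \<in> C"
          using funpow_image_subset[OF C(2)] p by (auto simp: funpow_left_inverse h_f)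
        finally show ?thesis .
      qed
      then show "onorm (frechet_derivative (h ^^ n) (at ((f ^^ n) p))) \<le> B ^ n"
        using h B0
        by (intro onorm_frechet_derivative_funpow_le locally_bounded_derivative_differentiable)
          (auto simp: B_def intro: le_max_iff_disj[THEN iffD2, OF disjI1])
      show "onorm (frechet_derivative (f ^^ n) (at p)) \<le> max_deriv_norm f C n"
        using C(1) p by (rule onorm_le_max_deriv_norm)
    qed (simp add: B_def)
    finally show ?thesis .
  qed
  then have "(1 / B) ^ n \<le> max_deriv_norm f C n" for n
    by (simp add: B_def power_one_over divide_le_eq mult.commute)
  then show ?thesis
    using that[of "1 / B"] by (simp add: B_def)
qed

lemma max_deriv_norm_pos:
  "compact C \<Longrightarrow> f ` C \<subseteq> C \<Longrightarrow> C \<noteq> {} \<Longrightarrow> 0 < max_deriv_norm f C n"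
  by (metis max_deriv_norm_exponential_lower_bound order_less_le_trans zero_less_power)

lemma max_deriv_norm_add_le:
  assumes "compact C" "compact C'" "C \<noteq> {}" "(f ^^ n) ` C \<subseteq> C'"
  shows "max_deriv_norm f C (m + n) \<le> max_deriv_norm f C' m * max_deriv_norm f C n"
  unfolding max_deriv_norm_def[of f C "m + n"]
proof (rule cSUP_least[OF \<open>C \<noteq> {}\<close>])
  fix p assume "p \<in> C"
  have "onorm (frechet_derivative (f ^^ (m + n)) (at p)) \<le>
      onorm (frechet_derivative (f ^^ m) (at ((f ^^ n) p))) * onorm (frechet_derivative (f ^^ n) (at p))"
    unfolding funpow_add by (intro onorm_frechet_derivative_compose_le differentiable_funpow)
  also have "\<dots> \<le> max_deriv_norm f C' m * max_deriv_norm f C n"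
    using assms \<open>p \<in> C\<close>
    by (intro mult_mono onorm_le_max_deriv_norm onorm_frechet_derivative_nonneg
        differentiable_funpow max_deriv_norm_nonneg) auto
  finally show "onorm (frechet_derivative (f ^^ (m + n)) (at p)) \<le>
      max_deriv_norm f C' m * max_deriv_norm f C n" .
qed

lemma log_max_deriv_norm_quotient_convergent:
  assumes C: "compact C" "f ` C \<subseteq> C" "C \<noteq> {}"
  shows "convergent (\<lambda>n. ln (max_deriv_norm f C n) / n)"
proof -
  have pos: "0 < max_deriv_norm f C n" for n
    using C by (rule max_deriv_norm_pos)
  have sub: "ln (max_deriv_norm f C (m + n)) \<le>
      ln (max_deriv_norm f C m) + ln (max_deriv_norm f C n)" for m n
  proof -
    have "ln (max_deriv_norm f C (m + n)) \<le> ln (max_deriv_norm f C m * max_deriv_norm f C n)"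
      using max_deriv_norm_add_le[OF C(1,1,3) funpow_image_subset[OF C(2)], of m n] pos
      by (intro ln_le_cancel_iff[THEN iffD2] mult_pos_pos)
    also have "\<dots> = ln (max_deriv_norm f C m) + ln (max_deriv_norm f C n)"
      using pos by (intro ln_mult_pos)
    finally show ?thesis .
  qed
  obtain c where c: "c > 0" "\<And>n. c ^ n \<le> max_deriv_norm f C n"
    using max_deriv_norm_exponential_lower_bound[OF C] by blast
  have "ln c \<le> ln (max_deriv_norm f C n) / n" if "n > 0" for n
  proof -
    have "n * ln c = ln (c ^ n)"
      using c(1) by (simp add: ln_realpow)
    also have "\<dots> \<le> ln (max_deriv_norm f C n)"
      using c pos by (simp add: ln_le_cancel_iff)
    finally show ?thesis
      using that by (simp add: le_divide_eq mult.commute)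
  qed
  then have "bdd_below ((\<lambda>n. ln (max_deriv_norm f C n) / n) ` {0<..})"
    by (intro bdd_belowI2) auto
  then show ?thesis
    by (rule convergentI[OF subadditive_quotient_tendsto_Inf[OF sub]])
qed

lemma log_max_deriv_norm_limit_le:
  assumes "compact C" "compact C'" "C \<noteq> {}" "f ` C \<subseteq> C" "(f ^^ N) ` C \<subseteq> C'"
    and "(\<lambda>n. ln (max_deriv_norm f C n) / n) \<longlonglongrightarrow> L"
    and "(\<lambda>n. ln (max_deriv_norm f C' n) / n) \<longlonglongrightarrow> L'"
  shows "L \<le> L'"
proof (rule quotient_limit_le_shift[OF assms(6,7)])
  fix n
  have pos: "0 < max_deriv_norm f C (n + N)" "0 < max_deriv_norm f C N"
    using assms by (simp_all add: max_deriv_norm_pos)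
  have le: "max_deriv_norm f C (n + N) \<le> max_deriv_norm f C' n * max_deriv_norm f C N"
    using assms by (intro max_deriv_norm_add_le)
  then have "0 < max_deriv_norm f C' n"
    using pos zero_less_mult_pos2 by (metis order_less_le_trans)
  then show "ln (max_deriv_norm f C (n + N)) \<le>
      ln (max_deriv_norm f C' n) + ln (max_deriv_norm f C N)"
    using pos le by (simp flip: ln_mult_pos)
qed

lemma log_max_deriv_norm_same_limit:
  assumes C: "compact C" "f ` C \<subseteq> C" and C': "compact C'" "f ` C' \<subseteq> C'"
    and "(f ^^ N) ` C \<subseteq> C'" "(f ^^ N') ` C' \<subseteq> C"
  shows "\<exists>L. (\<lambda>n. ln (max_deriv_norm f C n) / n) \<longlonglongrightarrow> L \<and>
    (\<lambda>n. ln (max_deriv_norm f C' n) / n) \<longlonglongrightarrow> L"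
proof (cases "C = {}")
  case True
  then have "C' = {}"
    using assms(6) by blast
  with True show ?thesis
    by (auto simp: max_deriv_norm_def intro: lim_const_over_n)
next
  case False
  then have "C' \<noteq> {}"
    using assms(5) by blast
  obtain L L' where L: "(\<lambda>n. ln (max_deriv_norm f C n) / n) \<longlonglongrightarrow> L"
    and L': "(\<lambda>n. ln (max_deriv_norm f C' n) / n) \<longlonglongrightarrow> L'"
    using log_max_deriv_norm_quotient_convergent C C' False \<open>C' \<noteq> {}\<close>
    unfolding convergent_def by metis
  have "L \<le> L'" and "L' \<le> L"
    using log_max_deriv_norm_limit_le assms False \<open>C' \<noteq> {}\<close> L L' by blast+
  with L L' show ?thesis
    by auto
qed

lemma funpow_image_Int_subset_Int:
  assumes J: "closed J" and W: "compact W" "f ` (J \<inter> W) \<subseteq> J \<inter> W"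
    and K: "\<And>q. bounded (range (\<lambda>n. (f ^^ n) q)) \<Longrightarrow> bounded (range (\<lambda>n. (h ^^ n) q)) \<Longrightarrow>
      q \<in> interior W'"
  shows "\<exists>N. (f ^^ N) ` (J \<inter> W) \<subseteq> J \<inter> W'"
proof -
  have C: "compact (J \<inter> W)"
    using J W(1) by (rule closed_Int_compact)
  have "q \<in> interior W'" if "q \<in> (\<Inter>n. (f ^^ n) ` (J \<inter> W))" for q
  proof (rule K)
    show "bounded (range (\<lambda>n. (f ^^ n) q))" "bounded (range (\<lambda>n. (h ^^ n) q))"
      using mem_funpow_images_orbits[OF W(2) h_f that] compact_imp_bounded[OF C]
      by (auto intro: bounded_subset)
  qed
  then obtain N where "(f ^^ N) ` (J \<inter> W) \<subseteq> interior W'"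
    using funpow_image_subset_open[OF C _ W(2) open_interior]
      locally_bounded_derivative_continuous_on[OF f] by blast
  with funpow_image_subset[OF W(2)] interior_subset show ?thesis
    by blast
qed

lemma log_max_deriv_norm_same_limit_Int:
  assumes "closed J" "compact W" "compact W'"
    and "f ` (J \<inter> W) \<subseteq> J \<inter> W" "f ` (J \<inter> W') \<subseteq> J \<inter> W'"
    and "\<And>q. bounded (range (\<lambda>n. (f ^^ n) q)) \<Longrightarrow> bounded (range (\<lambda>n. (h ^^ n) q)) \<Longrightarrow>
      q \<in> interior W \<inter> interior W'"
  shows "\<exists>L. (\<lambda>n. ln (max_deriv_norm f (J \<inter> W) n) / n) \<longlonglongrightarrow> L \<and>
    (\<lambda>n. ln (max_deriv_norm f (J \<inter> W') n) / n) \<longlonglongrightarrow> L"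
proof -
  obtain N N' where "(f ^^ N) ` (J \<inter> W) \<subseteq> J \<inter> W'" "(f ^^ N') ` (J \<inter> W') \<subseteq> J \<inter> W"
    using funpow_image_Int_subset_Int assms by (metis IntD1 IntD2)
  then show ?thesis
    using assms by (intro log_max_deriv_norm_same_limit closed_Int_compact)
qed

end

definition henon_inv :: "complex poly \<Rightarrow> complex \<Rightarrow> complex \<times> complex \<Rightarrow> complex \<times> complex" where
  "henon_inv P a = (\<lambda>(u, v). ((v - poly P u) / a, u))"

lemma henon_inv_henon: "a \<noteq> 0 \<Longrightarrow> henon_inv P a (henon P a x) = x"
  by (cases x) (simp add: henon_inv_def henon_def)

lemma henon_henon_inv: "a \<noteq> 0 \<Longrightarrow> henon P a (henon_inv P a x) = x"
  by (cases x) (simp add: henon_inv_def henon_def)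

lemma has_derivative_poly_comp:
  fixes G :: "'a::real_normed_vector \<Rightarrow> 'b::real_normed_field"
  assumes "(G has_derivative G') (at x)"
  shows "((\<lambda>x. poly P (G x)) has_derivative (\<lambda>d. poly (pderiv P) (G x) * G' d)) (at x)"
  using has_derivative_compose[OF assms
      poly_DERIV[of P "G x", THEN has_field_derivative_imp_has_derivative]]
  by simp

lemma norm_fst_snd_le:
  fixes d :: "'a::real_normed_vector \<times> 'b::real_normed_vector"
  shows "norm (fst d) \<le> norm d" "norm (snd d) \<le> norm d"
  by (metis norm_fst_le prod.collapse) (metis norm_snd_le prod.collapse)

lemma locally_bounded_derivative_henon: "locally_bounded_derivative (henon P a)"
proof (rule locally_bounded_derivativeI)
  fix x :: "complex \<times> complex"
  have henon: "henon P a = (\<lambda>x. (snd x, poly P (snd x) + a * fst x))"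
    by (auto simp: henon_def fun_eq_iff)
  show "(henon P a has_derivative
      (\<lambda>d. (snd d, poly (pderiv P) (snd x) * snd d + a * fst d))) (at x)"
    unfolding henon
    by (intro has_derivative_Pair has_derivative_add has_derivative_mult_right
        has_derivative_poly_comp[OF has_derivative_snd[OF has_derivative_ident]]
        has_derivative_snd[OF has_derivative_ident] has_derivative_fst[OF has_derivative_ident])
next
  fix x d :: "complex \<times> complex"
  let ?c = "poly (pderiv P) (snd x)"
  have "norm (snd d, ?c * snd d + a * fst d) \<le>
      norm (snd d) + norm (?c * snd d + a * fst d)"
    by (rule norm_Pair_le)
  also have "\<dots> \<le> norm (snd d) + (norm ?c * norm (snd d) + norm a * norm (fst d))"
    using norm_triangle_ineq[of "?c * snd d" "a * fst d"] by (simp add: norm_mult)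
  also have "\<dots> \<le> norm d + (norm ?c * norm d + norm a * norm d)"
    using norm_fst_snd_le[of d] by (intro add_mono mult_left_mono) auto
  also have "\<dots> = (1 + norm ?c + norm a) * norm d"
    by (simp add: algebra_simps)
  finally show "norm (snd d, ?c * snd d + a * fst d) \<le> (1 + norm ?c + norm a) * norm d" .
qed (intro continuous_intros)

lemma locally_bounded_derivative_henon_inv:
  assumes "a \<noteq> 0"
  shows "locally_bounded_derivative (henon_inv P a)"
proof (rule locally_bounded_derivativeI)
  fix x :: "complex \<times> complex"
  have henon_inv: "henon_inv P a = (\<lambda>x. ((snd x - poly P (fst x)) / a, fst x))"
    by (auto simp: henon_inv_def fun_eq_iff)
  show "(henon_inv P a has_derivative
      (\<lambda>d. ((snd d - poly (pderiv P) (fst x) * fst d) / a, fst d))) (at x)"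
    unfolding henon_inv
    by (intro has_derivative_Pair bounded_linear.has_derivative[OF bounded_linear_divide]
        has_derivative_diff has_derivative_poly_comp[OF has_derivative_fst[OF has_derivative_ident]]
        has_derivative_snd[OF has_derivative_ident] has_derivative_fst[OF has_derivative_ident])
next
  fix x d :: "complex \<times> complex"
  let ?c = "poly (pderiv P) (fst x)"
  have "norm ((snd d - ?c * fst d) / a, fst d) \<le>
      norm ((snd d - ?c * fst d) / a) + norm (fst d)"
    by (rule norm_Pair_le)
  also have "\<dots> = norm (snd d - ?c * fst d) / norm a + norm (fst d)"
    by (simp add: norm_divide)
  also have "\<dots> \<le> (norm (snd d) + norm ?c * norm (fst d)) / norm a + norm (fst d)"
    using norm_triangle_ineq4[of "snd d" "?c * fst d"]
    by (intro add_right_mono divide_right_mono) (auto simp: norm_mult)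
  also have "\<dots> \<le> (norm d + norm ?c * norm d) / norm a + norm d"
    using norm_fst_snd_le[of d] by (intro add_mono divide_right_mono mult_left_mono) auto
  also have "\<dots> = (1 + (1 + norm ?c) / norm a) * norm d"
    by (simp add: algebra_simps add_divide_distrib)
  finally show "norm ((snd d - ?c * fst d) / a, fst d) \<le>
      (1 + (1 + norm ?c) / norm a) * norm d" .
qed (use assms in \<open>intro continuous_intros\<close>; simp)

lemma henon_composition_inverse:
  assumes "\<forall>(P, a) \<in> set L. a \<noteq> 0"
  shows "\<exists>h. locally_bounded_derivative (foldr (\<lambda>(P, a) f. henon P a \<circ> f) L id) \<and>
    locally_bounded_derivative h \<and>
    h \<circ> foldr (\<lambda>(P, a) f. henon P a \<circ> f) L id = id \<and>
    foldr (\<lambda>(P, a) f. henon P a \<circ> f) L id \<circ> h = id"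
  using assms
proof (induction L)
  case Nil
  show ?case
    using locally_bounded_derivative_id by (auto simp: id_def)
next
  case (Cons Pa L)
  obtain P a where Pa: "Pa = (P, a)"
    by (cases Pa)
  have "a \<noteq> 0"
    using Cons.prems Pa by auto
  let ?g = "foldr (\<lambda>(P, a) f. henon P a \<circ> f) L id"
  have "\<forall>(P, a) \<in> set L. a \<noteq> 0"
    using Cons.prems by simp
  with Cons.IH obtain h where h: "locally_bounded_derivative ?g" "locally_bounded_derivative h"
    "h \<circ> ?g = id" "?g \<circ> h = id"
    by blast
  have "foldr (\<lambda>(P, a) f. henon P a \<circ> f) (Pa # L) id = henon P a \<circ> ?g"
    by (simp add: Pa)
  moreover have "(h \<circ> henon_inv P a) \<circ> (henon P a \<circ> ?g) = id"
    and "(henon P a \<circ> ?g) \<circ> (h \<circ> henon_inv P a) = id"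
    using pointfree_idE[OF h(3)] pointfree_idE[OF h(4)] \<open>a \<noteq> 0\<close>
    by (simp_all add: fun_eq_iff henon_inv_henon henon_henon_inv)
  moreover have "locally_bounded_derivative (henon P a \<circ> ?g)"
    using locally_bounded_derivative_henon h(1) by (rule locally_bounded_derivative_compose)
  moreover have "locally_bounded_derivative (h \<circ> henon_inv P a)"
    using h(2) locally_bounded_derivative_henon_inv[OF \<open>a \<noteq> 0\<close>]
    by (rule locally_bounded_derivative_compose)
  ultimately show ?case
    by metis
qed

lemma Hd_left_inverse_pairs:
  assumes "g \<in> Hd d"
  obtains h where "left_inverse_pair g h" "left_inverse_pair h g" "inv g = h"
proof -
  obtain L where "g = foldr (\<lambda>(P, a) f. henon P a \<circ> f) L id" "\<forall>(P, a) \<in> set L. a \<noteq> 0"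
    using assms unfolding Hd_def by auto
  then obtain h where "locally_bounded_derivative g" "locally_bounded_derivative h"
    and "h \<circ> g = id" "g \<circ> h = id"
    using henon_composition_inverse by blast
  moreover from this have "inv g = h"
    by (intro inv_unique_comp)
  ultimately show ?thesis
    by (intro that) (unfold_locales, auto simp: pointfree_idE)
qed

theorem proposition5p1:
  fixes d :: nat and g :: "complex \<times> complex \<Rightarrow> complex \<times> complex"
    and V V' :: "(complex \<times> complex) set"
  assumes "d \<ge> 2" and "g \<in> Hd d"
    and "admissible g V" and "admissible g V'"
  shows "(\<exists>L. splus_seq g V \<longlonglongrightarrow> L \<and> splus_seq g V' \<longlonglongrightarrow> L) \<and>
         (\<exists>L. sminus_seq g V \<longlonglongrightarrow> L \<and> sminus_seq g V' \<longlonglongrightarrow> L)"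
proof -
  obtain h where plus: "left_inverse_pair g h" and minus: "left_inverse_pair h g" and "inv g = h"
    using Hd_left_inverse_pairs[OF assms(2)] .
  have growth: "growth_seq f C = (\<lambda>n. ln (max_deriv_norm f C n) / n)" for f C
    by (simp add: growth_seq_def max_deriv_norm_def fun_eq_iff)
  have K: "q \<in> interior V \<inter> interior V'" if "q \<in> Kset g" for q
    using that assms(3,4) by (auto simp: admissible_def)
  have "\<exists>L. splus_seq g V \<longlonglongrightarrow> L \<and> splus_seq g V' \<longlonglongrightarrow> L"
    unfolding splus_seq_def growth
    using assms(3,4) K \<open>inv g = h\<close>
    by (intro left_inverse_pair.log_max_deriv_norm_same_limit_Int[OF plus])
      (auto simp: admissible_def Jplus_def Kset_def Kplus_def Kminus_def)
  moreover have "\<exists>L. sminus_seq g V \<longlonglongrightarrow> L \<and> sminus_seq g V' \<longlonglongrightarrow> L"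
    unfolding sminus_seq_def growth \<open>inv g = h\<close>
    using assms(3,4) K \<open>inv g = h\<close>
    by (intro left_inverse_pair.log_max_deriv_norm_same_limit_Int[OF minus])
      (auto simp: admissible_def Jminus_def Kset_def Kplus_def Kminus_def)
  ultimately show ?thesis ..
qed

end
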